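(* Let $S$ be a modal left $E$-monoid, and let $E'\subseteq E(S)$ with a bijection $E\to E'$, $e\mapsto e'$, such that $e\sim_r e'$ for all $e\in E$. Then $1\in E'$, $S$ is a modal left $E'$-monoid, and its left $E'$-modal operation satisfies $s\cdot e'=(s\cdot e)'$ for all $s\in S$, $e\in E$. If $S$ is an inductive left $E$-monoid, then it is an inductive left $E'$-monoid and $(e\wedge f)'=e'\wedge f'$ for all $e,f\in E$.
   Context: For a semigroup $S$, $E(S)$ is its set of idempotents; for $e,f\in E(S)$, $e\le_r f$ iff $e=ef$, and $e\sim_r f$ iff $e\le_r f$ and $f\le_r e$. $E\subseteq E(S)$ is right pre-reduced if $e=ef$ and $f=fe$ imply $e=f$ for $e,f\in E$. Let $S$ be a monoid and $1\in E\subseteq E(S)$. $S$ is a modal left $E$-monoid if $E$ is right pre-reduced and (I1') for all $t\in S$, $e\in E$ there is $t\cdot e\in E$ such that for all $s\in S$: $ste=st$ iff $s(t\cdot e)=s$; the (necessarily unique) map $(t,e)\mapsto t\cdot e$ is the left $E$-modal operation. $S$ is an inductive left $E$-monoid if it is a modal left $E$-monoid, $(E,\le_r)$ is a meet-semilattice with meet $\wedge$, and (I2') for $s\in S$, $e,f\in E$: $se=sf=s$ implies $s(e\wedge f)=s$. *)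

theory Defs
  imports Main
begin

definition idempotents :: "'a::monoid_mult set" where
  "idempotents = {x. x * x = x}"

definition le_r :: "'a::monoid_mult \<Rightarrow> 'a \<Rightarrow> bool" where
  "le_r e f \<longleftrightarrow> e = e * f"

definition sim_r :: "'a::monoid_mult \<Rightarrow> 'a \<Rightarrow> bool" where
  "sim_r e f \<longleftrightarrow> le_r e f \<and> le_r f e"

definition right_pre_reduced :: "'a::monoid_mult set \<Rightarrow> bool" where
  "right_pre_reduced E \<longleftrightarrow> (\<forall>e\<in>E. \<forall>f\<in>E. e = e * f \<and> f = f * e \<longrightarrow> e = f)"

definition modal_witness :: "'a::monoid_mult set \<Rightarrow> 'a \<Rightarrow> 'a \<Rightarrow> 'a \<Rightarrow> bool" where
  "modal_witness E t e d \<longleftrightarrow> d \<in> E \<and> (\<forall>s. s * t * e = s * t \<longleftrightarrow> s * d = s)"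

definition modal_left_monoid :: "'a::monoid_mult set \<Rightarrow> bool" where
  "modal_left_monoid E \<longleftrightarrow> 1 \<in> E \<and> E \<subseteq> idempotents \<and> right_pre_reduced E \<and>
     (\<forall>t. \<forall>e\<in>E. \<exists>d. modal_witness E t e d)"

definition modal_op :: "'a::monoid_mult set \<Rightarrow> 'a \<Rightarrow> 'a \<Rightarrow> 'a" where
  "modal_op E t e = (THE d. modal_witness E t e d)"

definition is_meet :: "'a::monoid_mult set \<Rightarrow> 'a \<Rightarrow> 'a \<Rightarrow> 'a \<Rightarrow> bool" where
  "is_meet E e f m \<longleftrightarrow> m \<in> E \<and> le_r m e \<and> le_r m f \<and>
     (\<forall>g\<in>E. le_r g e \<and> le_r g f \<longrightarrow> le_r g m)"

definition meet :: "'a::monoid_mult set \<Rightarrow> 'a \<Rightarrow> 'a \<Rightarrow> 'a" where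
  "meet E e f = (THE m. is_meet E e f m)"

definition inductive_left_monoid :: "'a::monoid_mult set \<Rightarrow> bool" where
  "inductive_left_monoid E \<longleftrightarrow> modal_left_monoid E \<and>
     (\<forall>e\<in>E. \<forall>f\<in>E. \<exists>m. is_meet E e f m) \<and>
     (\<forall>s. \<forall>e\<in>E. \<forall>f\<in>E. s * e = s \<and> s * f = s \<longrightarrow> s * meet E e f = s)"

end

theory Submission
  imports Defs
begin

text \<open>Everything in the definitions of a modal or inductive left \<open>E\<close>-monoid is phrased through
  the conditions \<open>s * e = s\<close> and the preorder \<open>\<le>\<^sub>r\<close> on \<open>E\<close>, and both are invariant under
  replacing \<open>e\<close> by an \<open>\<sim>\<^sub>r\<close>-equivalent \<open>e'\<close>. Hence a bijection \<open>e \<mapsto> e'\<close> with \<open>e \<sim>\<^sub>r e'\<close>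
  transports witnesses of (I1'), meets and (I2') from \<open>E\<close> to \<open>E'\<close>, and the uniqueness coming from
  right pre-reducedness identifies the transported witnesses with the operations of \<open>E'\<close>.\<close>

lemma sim_r_sym: "sim_r e f \<Longrightarrow> sim_r f e"
  by (simp add: sim_r_def)

lemma sim_r_right_identity_iff:
  fixes e :: "'a::monoid_mult"
  assumes "sim_r e f"
  shows "s * e = s \<longleftrightarrow> s * f = s"
proof -
  have "s * f = s" if "sim_r e f" "s * e = s" for e f :: 'a
  proof -
    have "e = e * f" using that(1) by (simp add: sim_r_def le_r_def)
    then have "s * f = s * e" using that(2) by (metis mult.assoc)
    with that(2) show ?thesis by simp
  qed
  then show ?thesis using assms sim_r_sym by blast
qed

lemma sim_r_idempotent:
  fixes e :: "'a::monoid_mult"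
  assumes "sim_r e f"
  shows "f \<in> idempotents"
proof -
  have "e = e * f" "f = f * e" using assms by (auto simp: sim_r_def le_r_def)
  then have "f * f = f * (e * f)" by (metis mult.assoc)
  also have "\<dots> = f" using \<open>e = e * f\<close> \<open>f = f * e\<close> by (metis mult.assoc)
  finally show ?thesis by (simp add: idempotents_def)
qed

lemma le_r_sim_r_right_iff: "sim_r e f \<Longrightarrow> le_r x e \<longleftrightarrow> le_r x f"
  unfolding le_r_def by (metis sim_r_right_identity_iff)

lemma le_r_sim_r_left_iff:
  fixes e :: "'a::monoid_mult"
  assumes "sim_r e f"
  shows "le_r e y \<longleftrightarrow> le_r f y"
proof -
  have "e = e * f" "f = f * e" using assms by (auto simp: sim_r_def le_r_def)
  then show ?thesis unfolding le_r_def by (metis mult.assoc)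
qed

lemma modal_witness_unique:
  assumes "E \<subseteq> idempotents" "right_pre_reduced E"
    and "modal_witness E t e d" "modal_witness E t e d'"
  shows "d = d'"
proof -
  have dE: "d \<in> E" "d' \<in> E" using assms(3,4) by (auto simp: modal_witness_def)
  then have "d * d = d" "d' * d' = d'" using assms(1) by (auto simp: idempotents_def)
  moreover have "s * d = s \<longleftrightarrow> s * d' = s" for s
    using assms(3,4) by (auto simp: modal_witness_def)
  ultimately have "d = d * d'" "d' = d' * d" by metis+
  then show ?thesis using assms(2) dE by (auto simp: right_pre_reduced_def)
qed

lemma modal_op_eqI:
  assumes "E \<subseteq> idempotents" "right_pre_reduced E" "modal_witness E t e d"
  shows "modal_op E t e = d"
  unfolding modal_op_def using modal_witness_unique[OF assms(1,2)] assms(3) by blast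

lemma meet_eqI:
  assumes "right_pre_reduced E" "is_meet E e f m"
  shows "meet E e f = m"
proof -
  have "m' = m" if "is_meet E e f m'" for m'
  proof -
    have "le_r m' m" "le_r m m'" "m \<in> E" "m' \<in> E"
      using that assms(2) by (auto simp: is_meet_def)
    then show ?thesis using assms(1) by (auto simp: right_pre_reduced_def le_r_def)
  qed
  then show ?thesis unfolding meet_def using assms(2) by blast
qed

lemma meet_in: "is_meet E e f m \<Longrightarrow> meet E e f \<in> E" if "right_pre_reduced E"
  using meet_eqI[OF that] by (auto simp: is_meet_def)

locale sim_r_relabelling =
  fixes E E' :: "'a::monoid_mult set" and b :: "'a \<Rightarrow> 'a"
  assumes bij: "bij_betw b E E'"
    and sim: "e \<in> E \<Longrightarrow> sim_r e (b e)"
begin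

lemma image_eq: "E' = b ` E"
  using bij by (simp add: bij_betw_def)

lemma right_identity_iff: "e \<in> E \<Longrightarrow> s * e = s \<longleftrightarrow> s * b e = s"
  using sim sim_r_right_identity_iff by blast

lemma le_r_iff: "e \<in> E \<Longrightarrow> f \<in> E \<Longrightarrow> le_r (b e) (b f) \<longleftrightarrow> le_r e f"
  using sim le_r_sim_r_left_iff le_r_sim_r_right_iff by metis

lemma idempotents: "E' \<subseteq> idempotents"
  using sim sim_r_idempotent image_eq by blast

lemma one: "1 \<in> E \<Longrightarrow> 1 \<in> E'"
  using right_identity_iff[of 1 1] image_eq by force

lemma right_pre_reduced: "right_pre_reduced E \<Longrightarrow> right_pre_reduced E'"
  unfolding right_pre_reduced_def le_r_def[symmetric] image_eq
  by (auto simp: le_r_iff)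

lemma modal_witness:
  assumes "e \<in> E" "modal_witness E t e d"
  shows "modal_witness E' t (b e) (b d)"
  using assms right_identity_iff image_eq by (auto simp: modal_witness_def)

lemma modal_left_monoid:
  assumes "modal_left_monoid E"
  shows "modal_left_monoid E'"
  unfolding modal_left_monoid_def
proof (intro conjI allI ballI)
  fix t e' assume "e' \<in> E'"
  then obtain e where "e \<in> E" "e' = b e" using image_eq by auto
  then show "\<exists>d. modal_witness E' t e' d"
    using assms modal_witness unfolding modal_left_monoid_def by blast
qed (use assms one idempotents right_pre_reduced in \<open>auto simp: modal_left_monoid_def\<close>)

lemma modal_op:
  assumes "modal_left_monoid E" "e \<in> E"
  shows "modal_op E' s (b e) = b (modal_op E s e)"
proof -
  obtain d where d: "modal_witness E s e d"
    using assms unfolding modal_left_monoid_def by blast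
  have "E \<subseteq> idempotents" "right_pre_reduced E"
    using assms(1) by (auto simp: modal_left_monoid_def)
  then show ?thesis
    using modal_op_eqI d modal_op_eqI[OF idempotents _ modal_witness[OF assms(2) d]]
      right_pre_reduced by metis
qed

lemma is_meet:
  assumes "e \<in> E" "f \<in> E" "is_meet E e f m"
  shows "is_meet E' (b e) (b f) (b m)"
  using assms unfolding is_meet_def image_eq by (auto simp: le_r_iff)

lemma meet:
  assumes "inductive_left_monoid E" "e \<in> E" "f \<in> E"
  shows "meet E' (b e) (b f) = b (meet E e f)"
proof -
  have rpr: "right_pre_reduced E"
    using assms(1) by (simp add: inductive_left_monoid_def modal_left_monoid_def)
  obtain m where m: "is_meet E e f m"
    using assms unfolding inductive_left_monoid_def by blast
  show ?thesis
    using meet_eqI[OF rpr m] meet_eqI[OF right_pre_reduced[OF rpr] is_meet[OF assms(2,3) m]]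
    by simp
qed

lemma inductive_left_monoid:
  assumes ind: "inductive_left_monoid E"
  shows "inductive_left_monoid E'"
  unfolding inductive_left_monoid_def
proof (intro conjI ballI allI impI)
  have rpr: "right_pre_reduced E"
    using ind by (simp add: inductive_left_monoid_def modal_left_monoid_def)
  show "modal_left_monoid E'"
    using ind modal_left_monoid by (simp add: inductive_left_monoid_def)
  fix e' f' assume "e' \<in> E'" "f' \<in> E'"
  then obtain e f where ef: "e \<in> E" "f \<in> E" "e' = b e" "f' = b f"
    using image_eq by auto
  then obtain m where m: "is_meet E e f m"
    using ind unfolding inductive_left_monoid_def by blast
  then show "\<exists>m. is_meet E' e' f' m"
    using is_meet ef by blast
  fix s assume "s * e' = s \<and> s * f' = s"
  then have "s * meet E e f = s"
    using ind ef right_identity_iff unfolding inductive_left_monoid_def by blast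
  then show "s * meet E' e' f' = s"
    using right_identity_iff meet_in[OF rpr m] meet[OF ind ef(1,2)] ef by simp
qed

end

theorem proposition5p5:
  fixes E E' :: "'a::monoid_mult set" and b :: "'a \<Rightarrow> 'a"
  assumes "modal_left_monoid E"
    and "E' \<subseteq> idempotents"
    and "bij_betw b E E'"
    and "\<forall>e\<in>E. sim_r e (b e)"
  shows "1 \<in> E' \<and> modal_left_monoid E' \<and>
         (\<forall>s. \<forall>e\<in>E. modal_op E' s (b e) = b (modal_op E s e)) \<and>
         (inductive_left_monoid E \<longrightarrow>
            inductive_left_monoid E' \<and>
            (\<forall>e\<in>E. \<forall>f\<in>E. meet E' (b e) (b f) = b (meet E e f)))"
proof -
  interpret sim_r_relabelling E E' b
    using assms(3,4) by unfold_locales auto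
  have "1 \<in> E" using assms(1) by (simp add: modal_left_monoid_def)
  then show ?thesis
    using assms(1) one modal_left_monoid modal_op inductive_left_monoid meet by blast
qed

end
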